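(* Let $r\ge 3$ and $1\le t\le r-2$ be integers. If $\mathcal F\subseteq X_1\times\dots\times X_r$ is coordinate-wise shifted and is a non-trivial $t$-intersecting family, then the family of projections $\mathcal P(\mathcal F)\subseteq 2^{[r]}$ is non-trivial $t$-intersecting, i.e. $|A\cap B|\ge t$ for all $A,B\in\mathcal P(\mathcal F)$ and $\bigl|\bigcap_{P\in\mathcal P(\mathcal F)}P\bigr|<t$.
   Context: Let $X_\ell=[n_\ell]$ for $1\le \ell\le r$, with $n_\ell\ge2$. For $A,B\in X_1\times\dots\times X_r$, write $A\cap B=\{\ell:A[\ell]=B[\ell]\}$ ($A[\ell]$ the $\ell$-th coordinate). $\mathcal F$ is $t$-intersecting if $|A\cap B|\ge t$ for all $A,B\in\mathcal F$; $\bigcap\mathcal F$ is the set of coordinates $\ell$ on which all members of $\mathcal F$ agree; a $t$-intersecting $\mathcal F$ is non-trivial if $|\bigcap\mathcal F|<t$. The projection of $F$ is $\mathcal P(F)=\{\ell\in[r]:F[\ell]=1\}$ and $\mathcal P(\mathcal F)=\{\mathcal P(F):F\in\mathcal F\}$. For $1\le\ell\le r$ and $1<j\le n_\ell$, the shift $S^{(\ell)}_j$ acts on $F\in\mathcal F$ by: if $F[\ell]=j$ and the sequence $F'$ obtained from $F$ by replacing its $\ell$-th coordinate by $1$ is not in $\mathcal F$, then $S^{(\ell)}_j(F)=F'$; otherwise $S^{(\ell)}_j(F)=F$. Set $S^{(\ell)}_j(\mathcal F)=\{S^{(\ell)}_j(F):F\in\mathcal F\}$. $\mathcal F$ is $\ell$-shifted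 if $S^{(\ell)}_j(\mathcal F)=\mathcal F$ for all $1<j\le n_\ell$, and coordinate-wise shifted if it is $\ell$-shifted for every $1\le\ell\le r$. *)

theory Defs
  imports Main "HOL-Library.FuncSet"
begin

text \<open>Sequences in X_1 x ... x X_r are functions on coordinates {1..r}
  (extensional: undefined outside), with X_l = {1..n l}.\<close>

definition prodspace :: "nat \<Rightarrow> (nat \<Rightarrow> nat) \<Rightarrow> (nat \<Rightarrow> nat) set" where
  "prodspace r n = PiE {1..r} (\<lambda>l. {1..n l})"

definition agree :: "nat \<Rightarrow> (nat \<Rightarrow> nat) \<Rightarrow> (nat \<Rightarrow> nat) \<Rightarrow> nat set" where
  "agree r A B = {l \<in> {1..r}. A l = B l}"

definition t_intersecting :: "nat \<Rightarrow> nat \<Rightarrow> (nat \<Rightarrow> nat) set \<Rightarrow> bool" where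
  "t_intersecting r t FF \<longleftrightarrow> (\<forall>A\<in>FF. \<forall>B\<in>FF. card (agree r A B) \<ge> t)"

definition common_coords :: "nat \<Rightarrow> (nat \<Rightarrow> nat) set \<Rightarrow> nat set" where
  "common_coords r FF = {l \<in> {1..r}. \<forall>A\<in>FF. \<forall>B\<in>FF. A l = B l}"

definition nontrivial_t_intersecting :: "nat \<Rightarrow> nat \<Rightarrow> (nat \<Rightarrow> nat) set \<Rightarrow> bool" where
  "nontrivial_t_intersecting r t FF \<longleftrightarrow> t_intersecting r t FF \<and> card (common_coords r FF) < t"

definition shift_elem :: "nat \<Rightarrow> nat \<Rightarrow> (nat \<Rightarrow> nat) set \<Rightarrow> (nat \<Rightarrow> nat) \<Rightarrow> (nat \<Rightarrow> nat)" where
  "shift_elem l j FF F = (if F l = j \<and> F(l := 1) \<notin> FF then F(l := 1) else F)"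

definition shift_family :: "nat \<Rightarrow> nat \<Rightarrow> (nat \<Rightarrow> nat) set \<Rightarrow> (nat \<Rightarrow> nat) set" where
  "shift_family l j FF = shift_elem l j FF ` FF"

definition coord_shifted :: "nat \<Rightarrow> (nat \<Rightarrow> nat) \<Rightarrow> (nat \<Rightarrow> nat) set \<Rightarrow> bool" where
  "coord_shifted r n FF \<longleftrightarrow> (\<forall>l\<in>{1..r}. \<forall>j. 1 < j \<and> j \<le> n l \<longrightarrow> shift_family l j FF = FF)"

definition proj :: "nat \<Rightarrow> (nat \<Rightarrow> nat) \<Rightarrow> nat set" where
  "proj r F = {l \<in> {1..r}. F l = 1}"

definition set_t_intersecting :: "nat \<Rightarrow> nat set set \<Rightarrow> bool" where
  "set_t_intersecting t P \<longleftrightarrow> (\<forall>A\<in>P. \<forall>B\<in>P. card (A \<inter> B) \<ge> t)"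

text \<open>Intersection of a family of subsets of [r] (taken inside [r]).\<close>
definition set_common :: "nat \<Rightarrow> nat set set \<Rightarrow> nat set" where
  "set_common r P = {1..r} \<inter> \<Inter> P"

end

theory Submission
  imports Defs
begin

text \<open>In a coordinate-wise shifted family every coordinate of a member can be reset to 1,
  one coordinate at a time. Resetting all coordinates where \<open>B\<close> differs from 1 turns \<open>A\<close>
  into a member \<open>A'\<close> with \<open>A' \<inter> B = \<P>(A) \<inter> \<P>(B)\<close>, so the projections inherit
  \<open>t\<close>-intersection. A coordinate lying in every projection is one on which all members
  equal 1, so \<open>\<Inter>\<P>(\<F>) \<subseteq> \<Inter>\<F>\<close> and non-triviality is inherited too.\<close>

lemma coord_shifted_fun_upd_one:
  assumes "FF \<subseteq> prodspace r n" and "coord_shifted r n FF"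
    and "F \<in> FF" and "l \<in> {1..r}"
  shows "F(l := 1) \<in> FF"
proof (cases "F l = 1")
  case True
  then show ?thesis using \<open>F \<in> FF\<close> by (metis fun_upd_triv)
next
  case False
  have "F l \<in> {1..n l}"
    using assms(1,3,4) unfolding prodspace_def by (auto simp: PiE_def Pi_def)
  with False have "shift_family l (F l) FF = FF"
    using assms(2,4) unfolding coord_shifted_def by auto
  moreover have "F(l := 1) \<in> shift_family l (F l) FF" if "F(l := 1) \<notin> FF"
    using that \<open>F \<in> FF\<close> unfolding shift_family_def shift_elem_def by force
  ultimately show ?thesis by blast
qed

lemma coord_shifted_reset_to_one:
  assumes "FF \<subseteq> prodspace r n" and "coord_shifted r n FF"
    and "F \<in> FF" and "U \<subseteq> {1..r}"
  shows "(\<lambda>l. if l \<in> U then 1 else F l) \<in> FF"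
proof -
  have "finite U" using assms(4) finite_subset by blast
  from this assms(4) show ?thesis
  proof (induction U rule: finite_induct)
    case empty
    then show ?case using \<open>F \<in> FF\<close> by simp
  next
    case (insert x U)
    then have "(\<lambda>l. if l \<in> U then 1 else F l)(x := 1) \<in> FF"
      by (intro coord_shifted_fun_upd_one[OF assms(1,2)]) auto
    moreover have "(\<lambda>l. if l \<in> U then 1 else F l)(x := 1)
        = (\<lambda>l. if l \<in> insert x U then 1 else F l)"
      by auto
    ultimately show ?case by simp
  qed
qed

lemma agree_reset_to_one_eq_proj_Int:
  "agree r (\<lambda>l. if l \<in> {1..r} \<and> B l \<noteq> 1 then 1 else A l) B = proj r A \<inter> proj r B"
  unfolding agree_def proj_def by auto

lemma set_t_intersecting_proj:
  assumes "FF \<subseteq> prodspace r n" and "coord_shifted r n FF"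
    and "t_intersecting r t FF"
  shows "set_t_intersecting t (proj r ` FF)"
  unfolding set_t_intersecting_def
proof (intro ballI)
  fix PA PB assume "PA \<in> proj r ` FF" "PB \<in> proj r ` FF"
  then obtain A B where "A \<in> FF" "B \<in> FF" and P: "PA = proj r A" "PB = proj r B"
    by auto
  define A' where "A' = (\<lambda>l. if l \<in> {1..r} \<and> B l \<noteq> 1 then 1 else A l)"
  have "{l \<in> {1..r}. B l \<noteq> 1} \<subseteq> {1..r}" by blast
  from coord_shifted_reset_to_one[OF assms(1,2) \<open>A \<in> FF\<close> this]
  have "A' \<in> FF"
    unfolding A'_def by (simp only: mem_Collect_eq)
  with \<open>B \<in> FF\<close> assms(3) have "t \<le> card (agree r A' B)"
    unfolding t_intersecting_def by blast
  then show "t \<le> card (PA \<inter> PB)"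
    unfolding A'_def agree_reset_to_one_eq_proj_Int P .
qed

lemma set_common_proj_subset_common_coords:
  "set_common r (proj r ` FF) \<subseteq> common_coords r FF"
proof
  fix x assume "x \<in> set_common r (proj r ` FF)"
  then have "x \<in> {1..r}" and one: "\<forall>F\<in>FF. F x = 1"
    unfolding set_common_def proj_def by auto
  moreover have "A x = B x" if "A \<in> FF" "B \<in> FF" for A B
    using one[rule_format, OF that(1)] one[rule_format, OF that(2)] by simp
  ultimately show "x \<in> common_coords r FF"
    unfolding common_coords_def by blast
qed

lemma card_set_common_proj_le:
  "card (set_common r (proj r ` FF)) \<le> card (common_coords r FF)"
  by (rule card_mono[OF _ set_common_proj_subset_common_coords]) (simp add: common_coords_def)

theorem lemma2p1:
  fixes r t :: nat and n :: "nat \<Rightarrow> nat" and FF :: "(nat \<Rightarrow> nat) set"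
  assumes "r \<ge> 3" and "1 \<le> t" and "t \<le> r - 2"
    and "\<forall>l\<in>{1..r}. n l \<ge> 2"
    and "FF \<subseteq> prodspace r n"
    and "coord_shifted r n FF"
    and "nontrivial_t_intersecting r t FF"
  shows "set_t_intersecting t (proj r ` FF) \<and> card (set_common r (proj r ` FF)) < t"
proof
  have "t_intersecting r t FF" and "card (common_coords r FF) < t"
    using assms(7) unfolding nontrivial_t_intersecting_def by auto
  then show "set_t_intersecting t (proj r ` FF)"
    and "card (set_common r (proj r ` FF)) < t"
    using set_t_intersecting_proj[OF assms(5,6)] card_set_common_proj_le[of r FF]
    by simp_all
qed

end
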